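(* Let $N=[n(i,j)]_{1\le i,j\le r}$ be a generalised Cartan matrix, $\mathfrak h$, $\alpha_1,\dots,\alpha_r$, $\mathcal A$, $F:\mathfrak h\to\mathrm{Der}(\mathcal A)$ and invertible $v_1,\dots,v_r\in\mathcal A$ with $F(H)(v_i)=\alpha_i(H)v_i$ for all $H\in\mathfrak h$ be as in the context. Suppose there exist $\delta_1,\dots,\delta_r,\delta_{-1},\dots,\delta_{-r}\in\mathrm{Im}\,F$ such that, with $\mathbf X_i=v_i\delta_i$ and $\mathbf X_{-i}=v_i^{-1}\delta_{-i}$, one has in $\mathrm{Der}(\mathcal A)$ $$[\mathbf X_i,\mathbf X_{-i}]=F(H_i)\quad(1\le i\le r),\qquad [\mathbf X_i,\mathbf X_{-j}]=0\quad(i\neq j).$$ Set $A_{ij}=\alpha_i(\delta_j)$ for $1\le i,j\le r$. Then: (i) $A_{ii}\neq 0$ for $1\le i\le r$; (ii) $\delta_{-i}=\frac{1}{A_{ii}}\bigl(-F(H_i)+\frac{1}{A_{ii}}\delta_i\bigr)$ for $1\le i\le r$; (iii) $\frac{A_{ij}}{A_{jj}}\in\{0,-1\}$ for $i\neq j$; (iv) $\frac{A_{ij}}{A_{jj}}+\frac{A_{ji}}{A_{ii}}=n(j,i)$ for all $i,j$; (v) the matrix $A'=[\frac{A_{ij}}{A_{jj}}]$ has the property that if its $(i,j)$ entry equals $-1$, then the $i$-th row and the $j$-th column of $A'$ contain no other entry equal to $-1$; (vi) if $\frac{A_{ij}}{A_{jj}}=\frac{A_{ji}}{A_{ii}}=-1$,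 then $N$ contains $\begin{pmatrix}2&-2\\-2&2\end{pmatrix}$ as a direct factor, i.e. $n(i,j)=n(j,i)=-2$ and $n(i,k)=n(k,i)=n(j,k)=n(k,j)=0$ for all $k\notin\{i,j\}$, and moreover $F(H_i)+F(H_j)=0$.
   Context: A generalised Cartan matrix is $N=[n(i,j)]_{1\le i,j\le r}$ with $n(i,j)\in\mathbb Z$, $n(i,i)=2$, $n(i,j)\le 0$ for $i\neq j$, and $n(i,j)=0\iff n(j,i)=0$. Let $s$ be the corank of $N$, let $\mathfrak h$ be the (abelian) complex Lie algebra with basis $H_1,\dots,H_{r+s}$, and let $\alpha_1,\dots,\alpha_r\in\mathfrak h^*$ be linearly independent with $\alpha_j(H_i)=n(i,j)$ for $1\le i,j\le r$; put $Z=\bigcap_{i}\ker\alpha_i$. $\mathcal A$ is a complex commutative algebra, $\mathrm{Der}(\mathcal A)$ its Lie algebra of derivations (commutator bracket); for $a\in\mathcal A$, $D\in\mathrm{Der}(\mathcal A)$, $aD$ denotes the derivation $b\mapsto aD(b)$. $F:\mathfrak h\to\mathrm{Der}(\mathcal A)$ is a Lie algebra homomorphism and $v_1,\dots,v_r\in\mathcal A$ are invertible with $F(H)(v_i)=\alpha_i(H)v_i$. Then $\ker F\subseteq Z$, so each $\alpha_i$ induces a well-defined linear form on $\mathrm{Im}\,F$, still denoted $\alpha_i$, via $\alpha_i(F(H))=\alpha_i(H)$. *)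

theory Defs
  imports Complex_Main
begin

definition gcm :: "nat \<Rightarrow> (nat \<Rightarrow> nat \<Rightarrow> int) \<Rightarrow> bool" where
  "gcm r N \<longleftrightarrow> (\<forall>i\<in>{1..r}. N i i = 2) \<and>
     (\<forall>i\<in>{1..r}. \<forall>j\<in>{1..r}. i \<noteq> j \<longrightarrow> N i j \<le> 0) \<and>
     (\<forall>i\<in>{1..r}. \<forall>j\<in>{1..r}. N i j = 0 \<longleftrightarrow> N j i = 0)"

definition lin_indep_on :: "nat set \<Rightarrow> nat set \<Rightarrow> (nat \<Rightarrow> nat \<Rightarrow> complex) \<Rightarrow> bool" where
  "lin_indep_on I K v \<longleftrightarrow>
     (\<forall>c. (\<forall>k\<in>K. (\<Sum>i\<in>I. c i * v i k) = 0) \<longrightarrow> (\<forall>i\<in>I. c i = 0))"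

definition mat_rank :: "nat \<Rightarrow> (nat \<Rightarrow> nat \<Rightarrow> int) \<Rightarrow> nat" where
  "mat_rank r N = Max {card J | J. J \<subseteq> {1..r} \<and>
      lin_indep_on J {1..r} (\<lambda>j k. of_int (N k j))}"

definition corank :: "nat \<Rightarrow> (nat \<Rightarrow> nat \<Rightarrow> int) \<Rightarrow> nat" where
  "corank r N = r - mat_rank r N"

text \<open>A commutative unital complex algebra is modelled by a comm_ring_1 type together
  with a unital ring homomorphism from the complex numbers (scalar c acts by multiplication
  with iota c).\<close>
definition cplx_alg_hom :: "(complex \<Rightarrow> 'a::comm_ring_1) \<Rightarrow> bool" where
  "cplx_alg_hom \<iota> \<longleftrightarrow> \<iota> 1 = 1 \<and> (\<forall>x y. \<iota> (x + y) = \<iota> x + \<iota> y) \<and>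
     (\<forall>x y. \<iota> (x * y) = \<iota> x * \<iota> y)"

definition is_der :: "(complex \<Rightarrow> 'a::comm_ring_1) \<Rightarrow> ('a \<Rightarrow> 'a) \<Rightarrow> bool" where
  "is_der \<iota> D \<longleftrightarrow> (\<forall>a b. D (a + b) = D a + D b) \<and>
     (\<forall>c a. D (\<iota> c * a) = \<iota> c * D a) \<and>
     (\<forall>a b. D (a * b) = a * D b + b * D a)"

definition der_br :: "('a::comm_ring_1 \<Rightarrow> 'a) \<Rightarrow> ('a \<Rightarrow> 'a) \<Rightarrow> ('a \<Rightarrow> 'a)" where
  "der_br D E = (\<lambda>b. D (E b) - E (D b))"

text \<open>The Cartan subalgebra h has basis H_1..H_m (m = r+s); an element of h is given by
  its coordinate vector h (only coordinates 1..m matter). F is the linear map determined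
  by the values FH k = F(H_k).\<close>
definition Fof :: "(complex \<Rightarrow> 'a::comm_ring_1) \<Rightarrow> nat \<Rightarrow> (nat \<Rightarrow> 'a \<Rightarrow> 'a)
    \<Rightarrow> (nat \<Rightarrow> complex) \<Rightarrow> ('a \<Rightarrow> 'a)" where
  "Fof \<iota> m FH h = (\<lambda>b. \<Sum>k\<in>{1..m}. \<iota> (h k) * FH k b)"

definition ImF :: "(complex \<Rightarrow> 'a::comm_ring_1) \<Rightarrow> nat \<Rightarrow> (nat \<Rightarrow> 'a \<Rightarrow> 'a) \<Rightarrow> ('a \<Rightarrow> 'a) set" where
  "ImF \<iota> m FH = range (Fof \<iota> m FH)"

text \<open>A linear form on h given by its values a k = alpha(H_k), evaluated at h.\<close>
definition lform :: "nat \<Rightarrow> (nat \<Rightarrow> complex) \<Rightarrow> (nat \<Rightarrow> complex) \<Rightarrow> complex" where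
  "lform m a h = (\<Sum>k\<in>{1..m}. a k * h k)"

text \<open>Induced form on Im F: alpha(F(H)) = alpha(H) (well defined since ker F is in Z).\<close>
definition lform_Im :: "(complex \<Rightarrow> 'a::comm_ring_1) \<Rightarrow> nat \<Rightarrow> (nat \<Rightarrow> 'a \<Rightarrow> 'a)
    \<Rightarrow> (nat \<Rightarrow> complex) \<Rightarrow> ('a \<Rightarrow> 'a) \<Rightarrow> complex" where
  "lform_Im \<iota> m FH a \<delta> = lform m a (SOME h. Fof \<iota> m FH h = \<delta>)"

end

theory Submission
  imports Defs
begin

(* The derivations delta_(+-j) lie in the abelian Lie algebra Im F, which acts diagonally on the
   units v_k; so the bracket of X_i = v_i delta_i and X_(-j) = v_j^-1 delta_(-j) is
   -v_i v_j^-1 (alpha_j(delta_i) delta_(-j) + alpha_i(delta_(-j)) delta_i).  Evaluating the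
   relations [X_i, X_(-i)] = F(H_i) and [X_i, X_(-j)] = 0 at v_k gives scalar identities between
   A_kj = alpha_k(delta_j) and B_kj = alpha_k(delta_(-j)).  They yield A_ii B_ii = -1, and after
   eliminating B the normalised matrix P = A' satisfies, for i ~= j,
     P_ji (P_kj - n(j,k)) + (P_ij - n(j,i)) P_ki = 0.
   The instances with k in {i, j} force P_ij in {0, -1} and P_ij + P_ji = n(j,i); the others,
   combined with the sign conditions on a generalised Cartan matrix, give (v) and (vi). *)

lemma mult_right_cancel_unit:
  fixes a b u w :: "'a::comm_ring_1"
  assumes "u * w = 1" and "a * u = b * u"
  shows "a = b"
  by (metis assms mult.assoc mult_1_right)

context
  fixes \<iota> :: "complex \<Rightarrow> 'a::comm_ring_1"
  assumes hom: "cplx_alg_hom \<iota>"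
begin

lemma cplx_alg_hom_one: "\<iota> 1 = 1"
  and cplx_alg_hom_add: "\<iota> (x + y) = \<iota> x + \<iota> y"
  and cplx_alg_hom_mult: "\<iota> (x * y) = \<iota> x * \<iota> y"
  using hom unfolding cplx_alg_hom_def by auto

lemma cplx_alg_hom_zero: "\<iota> 0 = 0"
  using cplx_alg_hom_add[of 0 0] by simp

lemma cplx_alg_hom_uminus: "\<iota> (- x) = - \<iota> x"
  using cplx_alg_hom_add[of x "- x"] by (simp add: cplx_alg_hom_zero add_eq_0_iff)

lemma cplx_alg_hom_diff: "\<iota> (x - y) = \<iota> x - \<iota> y"
  using cplx_alg_hom_add[of x "- y"] by (simp add: cplx_alg_hom_uminus)

lemma cplx_alg_hom_sum: "\<iota> (sum f S) = (\<Sum>k\<in>S. \<iota> (f k))"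
  by (induction S rule: infinite_finite_induct) (simp_all add: cplx_alg_hom_zero cplx_alg_hom_add)

lemma cplx_alg_hom_inverse: "c \<noteq> 0 \<Longrightarrow> \<iota> c * \<iota> (1 / c) = 1"
  by (simp add: cplx_alg_hom_one flip: cplx_alg_hom_mult)

lemma cplx_alg_hom_eq_iff: "\<iota> x = \<iota> y \<longleftrightarrow> x = y"
proof
  assume "\<iota> x = \<iota> y"
  then have "\<iota> (x - y) * \<iota> (1 / (x - y)) = 0"
    by (simp add: cplx_alg_hom_diff)
  then show "x = y"
    using cplx_alg_hom_inverse[of "x - y"] by auto
qed simp

end

context
  fixes \<iota> :: "complex \<Rightarrow> 'a::comm_ring_1" and D :: "'a \<Rightarrow> 'a"
  assumes der: "is_der \<iota> D"
begin

lemma der_add: "D (a + b) = D a + D b"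
  and der_scale: "D (\<iota> c * a) = \<iota> c * D a"
  and der_mult: "D (a * b) = a * D b + b * D a"
  using der unfolding is_der_def by auto

lemma der_zero: "D 0 = 0"
  using der_add[of 0 0] by simp

lemma der_one: "D 1 = 0"
  using der_mult[of 1 1] by simp

lemma der_sum: "D (sum f S) = (\<Sum>k\<in>S. D (f k))"
  by (induction S rule: infinite_finite_induct) (simp_all add: der_zero der_add)

lemma der_unit_inverse:
  assumes "u * w = 1"
  shows "D w = - (w * w * D u)"
proof -
  have "u * D w + w * D u = 0"
    using der_mult[of u w] by (simp add: assms der_one)
  then have "w * u * D w + w * w * D u = 0"
    by (metis distrib_left mult.assoc mult_zero_right)
  then show ?thesis
    using assms by (simp add: mult.commute eq_neg_iff_add_eq_0)
qed

end

lemma der_br_eq_zero_iff: "der_br D E = (\<lambda>b. 0) \<longleftrightarrow> (\<forall>b. D (E b) = E (D b))"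
  by (simp add: der_br_def fun_eq_iff)

lemma der_br_scaled:
  assumes "is_der \<iota> D" and "is_der \<iota> E" and "\<And>b. D (E b) = E (D b)"
  shows "der_br (\<lambda>b. x * D b) (\<lambda>b. y * E b) b = x * D y * E b - y * E x * D b"
  using assms by (simp add: der_br_def der_mult algebra_simps)

lemma is_der_sum:
  assumes "\<And>k. k \<in> S \<Longrightarrow> is_der \<iota> (D k)"
  shows "is_der \<iota> (\<lambda>b. \<Sum>k\<in>S. c k * D k b)"
proof -
  have "D k (a + b) = D k a + D k b" "D k (\<iota> z * a) = \<iota> z * D k a"
    "D k (a * b) = a * D k b + b * D k a" if "k \<in> S" for k a b z
    using assms[OF that] by (simp_all add: der_add der_scale der_mult)
  then show ?thesis
    unfolding is_der_def
    by (simp add: sum.distrib sum_distrib_left algebra_simps cong: sum.cong)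
qed

lemma is_der_Fof:
  assumes "\<And>k. k \<in> {1..m} \<Longrightarrow> is_der \<iota> (FH k)"
  shows "is_der \<iota> (Fof \<iota> m FH h)"
  unfolding Fof_def using assms by (rule is_der_sum)

lemma Fof_commute:
  assumes "\<And>k. k \<in> {1..m} \<Longrightarrow> is_der \<iota> (FH k)"
    and "\<And>k l b. k \<in> {1..m} \<Longrightarrow> l \<in> {1..m} \<Longrightarrow> FH k (FH l b) = FH l (FH k b)"
  shows "Fof \<iota> m FH h (Fof \<iota> m FH h' b) = Fof \<iota> m FH h' (Fof \<iota> m FH h b)"
proof -
  have inner: "FH k (Fof \<iota> m FH g b) = (\<Sum>l = 1..m. \<iota> (g l) * FH k (FH l b))"
    if "k \<in> {1..m}" for k g
    unfolding Fof_def using assms(1)[OF that] by (simp add: der_sum der_scale)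
  have expand: "Fof \<iota> m FH g (Fof \<iota> m FH g' b) =
      (\<Sum>k = 1..m. \<Sum>l = 1..m. \<iota> (g k) * \<iota> (g' l) * FH k (FH l b))" for g g'
    unfolding Fof_def[of \<iota> m FH g]
    by (rule sum.cong[OF refl]) (simp add: inner sum_distrib_left mult.assoc)
  show ?thesis
    unfolding expand by (subst sum.swap) (auto intro!: sum.cong simp: assms(2) mult.commute)
qed

lemma ImF_eigenvector:
  assumes "cplx_alg_hom \<iota>" and "D \<in> ImF \<iota> m FH"
    and "\<And>k. k \<in> {1..m} \<Longrightarrow> FH k u = \<iota> (a k) * u"
  shows "D u = \<iota> (lform_Im \<iota> m FH a D) * u"
proof -
  define h where "h = (SOME h. Fof \<iota> m FH h = D)"
  have "Fof \<iota> m FH h = D"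
    using assms(2) unfolding h_def ImF_def by (metis (mono_tags) rangeE someI)
  then have "D u = (\<Sum>k = 1..m. \<iota> (h k) * (\<iota> (a k) * u))"
    using assms(3) unfolding Fof_def by auto
  also have "\<dots> = \<iota> (lform m a h) * u"
    using assms(1)
    by (simp add: lform_def cplx_alg_hom_sum cplx_alg_hom_mult sum_distrib_left sum_distrib_right mult_ac)
  finally show ?thesis
    unfolding lform_Im_def h_def .
qed

section \<open>Integer solutions of the normalised relations\<close>

lemma of_int_eq_minus_one_iff [simp]:
  "of_int z = (- 1 :: 'a::ring_char_0) \<longleftrightarrow> z = - 1"
  "(- 1 :: 'a) = of_int z \<longleftrightarrow> z = - 1"
  using of_int_eq_iff[of z "- 1", where 'a='a] by auto

lemma of_int_eq_minus_numeral_iff [simp]: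
  "of_int z = (- numeral n :: 'a::ring_char_0) \<longleftrightarrow> z = - numeral n"
  "(- numeral n :: 'a) = of_int z \<longleftrightarrow> z = - numeral n"
  using of_int_eq_iff[of z "- numeral n", where 'a='a] by auto

lemma gcm_diag: "gcm r N \<Longrightarrow> i \<in> {1..r} \<Longrightarrow> N i i = 2"
  and gcm_offdiag_nonpos: "gcm r N \<Longrightarrow> i \<in> {1..r} \<Longrightarrow> j \<in> {1..r} \<Longrightarrow> i \<noteq> j \<Longrightarrow> N i j \<le> 0"
  and gcm_zero_iff: "gcm r N \<Longrightarrow> i \<in> {1..r} \<Longrightarrow> j \<in> {1..r} \<Longrightarrow> N i j = 0 \<longleftrightarrow> N j i = 0"
  unfolding gcm_def by auto

lemma pair_relations_solutions:
  fixes x y :: complex and p q :: int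
  assumes zero_iff: "p = 0 \<longleftrightarrow> q = 0"
    and e1: "(x - of_int p) * (y + 1) = 0" and e2: "y * (x - of_int p - 1) = 0"
    and e3: "(y - of_int q) * (x + 1) = 0" and e4: "x * (y - of_int q - 1) = 0"
  shows "x \<in> {0, -1} \<and> x + y = of_int p \<and> p = q"
proof (cases "y = -1")
  case y: True
  then have x: "x = of_int p + 1"
    using e2 by (simp add: algebra_simps)
  show ?thesis
  proof (cases "x = 0")
    case True
    then have "p = -1"
      using x by (simp add: add_eq_0_iff minus_equation_iff)
    moreover have "q = -1"
      using e3 y True by simp
    ultimately show ?thesis
      using True y by simp
  next
    case False
    then have "q = -2"
      using e4 y by (simp flip: of_int_minus of_int_diff)
    moreover from this have "x = -1"
      using e3 y by (simp add: add_eq_0_iff minus_equation_iff)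
    ultimately show ?thesis
      using x y by (simp add: add_eq_0_iff minus_equation_iff)
  qed
next
  case False
  then have x: "x = of_int p"
    using e1 by (simp add: add_eq_0_iff minus_equation_iff)
  then have y: "y = 0"
    using e2 by simp
  show ?thesis
  proof (cases "q = 0")
    case True
    then show ?thesis
      using zero_iff x y by simp
  next
    case False
    then have "x = -1"
      using e3 y by (simp add: add_eq_0_iff minus_equation_iff)
    then show ?thesis
      using x y e4 by (simp add: add_eq_0_iff minus_equation_iff)
  qed
qed

(* P plays the role of A'; the relation is alpha_k applied to [X_i, X_(-j)] = 0, with B
   eliminated. *)
locale gcm_relations =
  fixes r :: nat and N :: "nat \<Rightarrow> nat \<Rightarrow> int" and P :: "nat \<Rightarrow> nat \<Rightarrow> complex"
  assumes gcm: "gcm r N"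
    and diag: "i \<in> {1..r} \<Longrightarrow> P i i = 1"
    and relation: "\<lbrakk>i \<in> {1..r}; j \<in> {1..r}; k \<in> {1..r}; i \<noteq> j\<rbrakk> \<Longrightarrow>
      P j i * (P k j - of_int (N j k)) + (P i j - of_int (N j i)) * P k i = 0"
begin

lemma pair_values:
  assumes i: "i \<in> {1..r}" and j: "j \<in> {1..r}" and "i \<noteq> j"
  shows "P i j \<in> {0, -1} \<and> P i j + P j i = of_int (N j i) \<and> N j i = N i j"
proof (rule pair_relations_solutions)
  show "N j i = 0 \<longleftrightarrow> N i j = 0"
    using gcm_zero_iff[OF gcm j i] .
  show "(P i j - of_int (N j i)) * (P j i + 1) = 0"
    using relation[of i j i] assms diag[OF i] by (simp add: algebra_simps)
  show "P j i * (P i j - of_int (N j i) - 1) = 0"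
    using relation[of i j j] assms diag[OF j] gcm_diag[OF gcm j] by (simp add: algebra_simps)
  show "(P j i - of_int (N i j)) * (P i j + 1) = 0"
    using relation[of j i j] assms diag[OF j] by (simp add: algebra_simps)
  show "P i j * (P j i - of_int (N i j) - 1) = 0"
    using relation[of j i i] assms diag[OF i] gcm_diag[OF gcm i] by (simp add: algebra_simps)
qed

lemma offdiag_values: "i \<in> {1..r} \<Longrightarrow> j \<in> {1..r} \<Longrightarrow> i \<noteq> j \<Longrightarrow> P i j \<in> {0, -1}"
  using pair_values by blast

lemma add_transpose: "i \<in> {1..r} \<Longrightarrow> j \<in> {1..r} \<Longrightarrow> P i j + P j i = of_int (N j i)"
  using pair_values diag gcm_diag[OF gcm] by (cases "i = j") auto

lemma N_sym: "i \<in> {1..r} \<Longrightarrow> j \<in> {1..r} \<Longrightarrow> N i j = N j i"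
  using pair_values by (cases "i = j") auto

lemma zero_if_N_zero:
  assumes "i \<in> {1..r}" "j \<in> {1..r}" "i \<noteq> j" "N i j = 0"
  shows "P i j = 0" "P j i = 0"
  using add_transpose[of i j] offdiag_values[of i j] offdiag_values[of j i] N_sym[of i j] assms
  by auto

lemma double_minus_one_direct_factor:
  assumes i: "i \<in> {1..r}" and j: "j \<in> {1..r}" and "P i j = -1" "P j i = -1"
  shows "N i j = -2 \<and> N j i = -2 \<and>
    (\<forall>k\<in>{1..r} - {i, j}. N i k = 0 \<and> N k i = 0 \<and> N j k = 0 \<and> N k j = 0)"
proof (intro conjI ballI)
  have "i \<noteq> j"
    using assms diag by force
  show Nji: "N j i = -2" and Nij: "N i j = -2"
    using add_transpose[OF i j] N_sym[OF i j] assms by simp_all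
  fix k
  assume "k \<in> {1..r} - {i, j}"
  then have k: "k \<in> {1..r}" "k \<noteq> i" "k \<noteq> j"
    by auto
  have "of_int (N j k + N i k) =
      (P j i * (P k j - of_int (N j k)) + (P i j - of_int (N j i)) * P k i) +
      (P i j * (P k i - of_int (N i k)) + (P j i - of_int (N i j)) * P k j)"
    using assms Nji Nij by (simp add: algebra_simps)
  also have "\<dots> = 0"
    using relation[of i j k] relation[of j i k] \<open>i \<noteq> j\<close> i j k by simp
  finally have "N j k + N i k = 0"
    by (simp only: of_int_eq_0_iff)
  moreover have "N j k \<le> 0" "N i k \<le> 0"
    using gcm_offdiag_nonpos[OF gcm] i j k by auto
  ultimately show "N i k = 0" "N k i = 0" "N j k = 0" "N k j = 0"
    using N_sym i j k by auto
qed

lemma minus_one_unique_in_row: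
  assumes i: "i \<in> {1..r}" and j: "j \<in> {1..r}" and k: "k \<in> {1..r}"
    and ij: "P i j = -1" and ik: "P i k = -1"
  shows "k = j"
proof (rule ccontr)
  assume "k \<noteq> j"
  have "i \<noteq> j" "i \<noteq> k"
    using diag[OF i] ij ik by auto
  have "P j i \<noteq> -1"
    using double_minus_one_direct_factor[OF i j ij] zero_if_N_zero[OF i k \<open>i \<noteq> k\<close>]
      ik k \<open>i \<noteq> k\<close> \<open>k \<noteq> j\<close> by auto
  moreover have "P k i \<noteq> -1"
    using double_minus_one_direct_factor[OF i k ik] zero_if_N_zero[OF i j \<open>i \<noteq> j\<close>]
      ij j \<open>i \<noteq> j\<close> \<open>k \<noteq> j\<close> by auto
  ultimately have "P j i = 0" "P k i = 0" "N i j = -1" "N i k = -1"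
    using pair_values[OF i j \<open>i \<noteq> j\<close>] pair_values[OF i k \<open>i \<noteq> k\<close>]
      offdiag_values[OF j i] offdiag_values[OF k i] \<open>i \<noteq> j\<close> \<open>i \<noteq> k\<close> ij ik by auto
  then have "P j k = 1"
    using relation[OF k i j] \<open>i \<noteq> k\<close> ik by simp
  then show False
    using offdiag_values[OF j k] \<open>k \<noteq> j\<close> by auto
qed

lemma minus_one_unique_in_column:
  assumes i: "i \<in> {1..r}" and j: "j \<in> {1..r}" and k: "k \<in> {1..r}"
    and ij: "P i j = -1" and kj: "P k j = -1"
  shows "k = i"
proof (rule ccontr)
  assume "k \<noteq> i"
  have "i \<noteq> j" "k \<noteq> j"
    using diag[OF j] ij kj by auto
  have "P j i \<noteq> -1"
    using double_minus_one_direct_factor[OF i j ij] zero_if_N_zero[OF k j \<open>k \<noteq> j\<close>]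
      kj k \<open>k \<noteq> i\<close> \<open>k \<noteq> j\<close> by auto
  moreover have "P j k \<noteq> -1"
    using double_minus_one_direct_factor[OF k j kj] zero_if_N_zero[OF i j \<open>i \<noteq> j\<close>]
      ij i \<open>k \<noteq> i\<close> \<open>i \<noteq> j\<close> by auto
  ultimately have "P j i = 0" "P j k = 0" "N i j = -1" "N k j = -1"
    using pair_values[OF i j \<open>i \<noteq> j\<close>] pair_values[OF k j \<open>k \<noteq> j\<close>]
      offdiag_values[OF j i] offdiag_values[OF j k] \<open>i \<noteq> j\<close> \<open>k \<noteq> j\<close> ij kj by auto
  then have "P i k = of_int (N k i) - 1" "P k i = of_int (N i k) - 1"
    using relation[OF j k i] relation[OF j i k] \<open>k \<noteq> j\<close> \<open>i \<noteq> j\<close> ij kj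
    by (simp_all add: algebra_simps)
  then have "of_int (N k i) = (of_int (2 * N k i - 2) :: complex)"
    using add_transpose[OF i k] N_sym[OF i k] by simp
  then have "N k i = 2 * N k i - 2"
    by (simp only: of_int_eq_iff)
  then show False
    using gcm_offdiag_nonpos[OF gcm k i \<open>k \<noteq> i\<close>] by simp
qed

end

section \<open>Realisations by derivations\<close>

locale derivation_realisation =
  fixes r :: nat and N :: "nat \<Rightarrow> nat \<Rightarrow> int" and \<alpha> :: "nat \<Rightarrow> nat \<Rightarrow> complex"
    and \<iota> :: "complex \<Rightarrow> 'a::comm_ring_1" and m :: nat and FH :: "nat \<Rightarrow> 'a \<Rightarrow> 'a"
    and v vinv :: "nat \<Rightarrow> 'a" and dp dm :: "nat \<Rightarrow> 'a \<Rightarrow> 'a"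
  assumes gcm: "gcm r N"
    and r_le_m: "r \<le> m"
    and alpha_N: "i \<in> {1..r} \<Longrightarrow> j \<in> {1..r} \<Longrightarrow> \<alpha> j i = of_int (N i j)"
    and hom: "cplx_alg_hom \<iota>"
    and F_der: "k \<in> {1..m} \<Longrightarrow> is_der \<iota> (FH k)"
    and F_comm: "k \<in> {1..m} \<Longrightarrow> l \<in> {1..m} \<Longrightarrow> der_br (FH k) (FH l) = (\<lambda>b. 0)"
    and v_inv: "i \<in> {1..r} \<Longrightarrow> v i * vinv i = 1"
    and v_eig: "i \<in> {1..r} \<Longrightarrow> k \<in> {1..m} \<Longrightarrow> FH k (v i) = \<iota> (\<alpha> i k) * v i"
    and dp_Im: "i \<in> {1..r} \<Longrightarrow> dp i \<in> ImF \<iota> m FH"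
    and dm_Im: "i \<in> {1..r} \<Longrightarrow> dm i \<in> ImF \<iota> m FH"
    and br_ii: "i \<in> {1..r} \<Longrightarrow> der_br (\<lambda>b. v i * dp i b) (\<lambda>b. vinv i * dm i b) = FH i"
    and br_ij: "i \<in> {1..r} \<Longrightarrow> j \<in> {1..r} \<Longrightarrow> i \<noteq> j \<Longrightarrow>
      der_br (\<lambda>b. v i * dp i b) (\<lambda>b. vinv j * dm j b) = (\<lambda>b. 0)"
begin

definition A :: "nat \<Rightarrow> nat \<Rightarrow> complex" where
  "A i j = lform_Im \<iota> m FH (\<alpha> i) (dp j)"

definition B :: "nat \<Rightarrow> nat \<Rightarrow> complex" where
  "B i j = lform_Im \<iota> m FH (\<alpha> i) (dm j)"

definition A' :: "nat \<Rightarrow> nat \<Rightarrow> complex" where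
  "A' i j = A i j / A j j"

lemmas iota_simps = cplx_alg_hom_zero[OF hom] cplx_alg_hom_add[OF hom] cplx_alg_hom_mult[OF hom]
  cplx_alg_hom_uminus[OF hom] cplx_alg_hom_diff[OF hom]

lemma iota_cancel: "c \<noteq> 0 \<Longrightarrow> \<iota> (1 / c) * (\<iota> c * x) = x"
  using cplx_alg_hom_inverse[OF hom] by (metis mult.assoc mult.commute mult_1)

lemma ImF_der: "D \<in> ImF \<iota> m FH \<Longrightarrow> is_der \<iota> D"
  unfolding ImF_def using is_der_Fof[OF F_der] by auto

lemma ImF_commute: "D \<in> ImF \<iota> m FH \<Longrightarrow> E \<in> ImF \<iota> m FH \<Longrightarrow> D (E b) = E (D b)"
  unfolding ImF_def using Fof_commute[OF F_der] F_comm by (auto simp: der_br_eq_zero_iff)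

lemma dp_eigen: "j \<in> {1..r} \<Longrightarrow> k \<in> {1..r} \<Longrightarrow> dp j (v k) = \<iota> (A k j) * v k"
  unfolding A_def using ImF_eigenvector[OF hom dp_Im] v_eig r_le_m by auto

lemma dm_eigen: "j \<in> {1..r} \<Longrightarrow> k \<in> {1..r} \<Longrightarrow> dm j (v k) = \<iota> (B k j) * v k"
  unfolding B_def using ImF_eigenvector[OF hom dm_Im] v_eig r_le_m by auto

lemma bracket_eq:
  assumes i: "i \<in> {1..r}" and j: "j \<in> {1..r}"
  shows "der_br (\<lambda>b. v i * dp i b) (\<lambda>b. vinv j * dm j b) b =
    - (v i * vinv j * (\<iota> (A j i) * dm j b + \<iota> (B i j) * dp i b))"
proof -
  have "dp i (vinv j) = - ((v j * vinv j) * (vinv j * \<iota> (A j i)))"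
    using der_unit_inverse[OF ImF_der[OF dp_Im[OF i]] v_inv[OF j]] dp_eigen[OF i j]
    by (simp add: mult_ac)
  then have dp_vinv: "dp i (vinv j) = - (vinv j * \<iota> (A j i))"
    using v_inv[OF j] by simp
  have "der_br (\<lambda>b. v i * dp i b) (\<lambda>b. vinv j * dm j b) b =
      v i * dp i (vinv j) * dm j b - vinv j * dm j (v i) * dp i b"
    using ImF_commute[OF dp_Im[OF i] dm_Im[OF j]]
    by (rule der_br_scaled[OF ImF_der[OF dp_Im[OF i]] ImF_der[OF dm_Im[OF j]]])
  then show ?thesis
    using dp_vinv dm_eigen[OF j i] by (simp add: algebra_simps)
qed

lemma FH_eq: "i \<in> {1..r} \<Longrightarrow> FH i b = - (\<iota> (A i i) * dm i b + \<iota> (B i i) * dp i b)"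
  using bracket_eq[of i i b] br_ii v_inv by simp

lemma dm_dp_dependent:
  assumes i: "i \<in> {1..r}" and j: "j \<in> {1..r}" and "i \<noteq> j"
  shows "\<iota> (A j i) * dm j b + \<iota> (B i j) * dp i b = 0"
proof (rule mult_right_cancel_unit)
  have "v i * vinv j * (vinv i * v j) = (v i * vinv i) * (v j * vinv j)"
    by (simp add: mult_ac)
  then show "v i * vinv j * (vinv i * v j) = 1"
    using v_inv[OF i] v_inv[OF j] by simp
  show "(\<iota> (A j i) * dm j b + \<iota> (B i j) * dp i b) * (v i * vinv j) = 0 * (v i * vinv j)"
    using bracket_eq[OF i j, of b] br_ij[OF assms] by (simp add: mult.commute)
qed

lemma N_eq_AB:
  assumes i: "i \<in> {1..r}" and k: "k \<in> {1..r}"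
  shows "of_int (N i k) = - (A i i * B k i + B i i * A k i)"
proof -
  have "\<iota> (of_int (N i k)) * v k = \<iota> (- (A i i * B k i + B i i * A k i)) * v k"
    using FH_eq[OF i, of "v k"] v_eig[OF k, of i] alpha_N[OF i k] r_le_m i
      dp_eigen[OF i k] dm_eigen[OF i k]
    by (simp add: iota_simps algebra_simps)
  then show ?thesis
    using mult_right_cancel_unit[OF v_inv[OF k]] cplx_alg_hom_eq_iff[OF hom] by blast
qed

lemma AB_relation:
  assumes i: "i \<in> {1..r}" and j: "j \<in> {1..r}" and k: "k \<in> {1..r}" and "i \<noteq> j"
  shows "A j i * B k j + B i j * A k i = 0"
proof -
  have "\<iota> (A j i * B k j + B i j * A k i) * v k = \<iota> 0 * v k"
    using dm_dp_dependent[OF i j \<open>i \<noteq> j\<close>, of "v k"] dp_eigen[OF i k] dm_eigen[OF j k]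
    by (simp add: iota_simps algebra_simps)
  then show ?thesis
    using mult_right_cancel_unit[OF v_inv[OF k]] cplx_alg_hom_eq_iff[OF hom] by blast
qed

lemma A_diag_mult_B_diag: "i \<in> {1..r} \<Longrightarrow> A i i * B i i = -1"
  using N_eq_AB[of i i] gcm_diag[OF gcm, of i] by (simp add: algebra_simps minus_equation_iff)

lemma A_diag_nonzero: "i \<in> {1..r} \<Longrightarrow> A i i \<noteq> 0"
  using A_diag_mult_B_diag by force

lemma B_diag: "i \<in> {1..r} \<Longrightarrow> B i i = - (1 / A i i)"
  using A_diag_mult_B_diag A_diag_nonzero by (simp add: field_simps)

lemma A'_minus_N: "j \<in> {1..r} \<Longrightarrow> k \<in> {1..r} \<Longrightarrow> A' k j - of_int (N j k) = A j j * B k j"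
  using N_eq_AB[of j k] B_diag[of j] A_diag_nonzero[of j] by (simp add: A'_def field_simps)

sublocale gcm_relations r N A'
proof
  show "gcm r N"
    by (fact gcm)
  show "A' i i = 1" if "i \<in> {1..r}" for i
    using A_diag_nonzero[OF that] by (simp add: A'_def)
  show "A' j i * (A' k j - of_int (N j k)) + (A' i j - of_int (N j i)) * A' k i = 0"
    if "i \<in> {1..r}" "j \<in> {1..r}" "k \<in> {1..r}" "i \<noteq> j" for i j k
  proof -
    have "A' j i * (A' k j - of_int (N j k)) + (A' i j - of_int (N j i)) * A' k i
        = A' j i * (A j j * B k j) + (A j j * B i j) * A' k i"
      using that by (simp add: A'_minus_N)
    also have "\<dots> = A j j / A i i * (A j i * B k j + B i j * A k i)"
      by (simp add: A'_def algebra_simps)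
    finally show ?thesis
      using AB_relation[OF that] by simp
  qed
qed

lemma A_dm_eq: "i \<in> {1..r} \<Longrightarrow> \<iota> (A i i) * dm i b = - FH i b + \<iota> (1 / A i i) * dp i b"
  using FH_eq[of i b] B_diag[of i] by (simp add: iota_simps)

lemma dm_eq:
  assumes i: "i \<in> {1..r}"
  shows "dm i = (\<lambda>b. \<iota> (1 / A i i) * (- FH i b + \<iota> (1 / A i i) * dp i b))"
proof
  fix b
  have "\<iota> (1 / A i i) * (- FH i b + \<iota> (1 / A i i) * dp i b) =
      \<iota> (1 / A i i) * (\<iota> (A i i) * dm i b)"
    using A_dm_eq[OF i, of b] by simp
  then show "dm i b = \<iota> (1 / A i i) * (- FH i b + \<iota> (1 / A i i) * dp i b)"
    using iota_cancel[OF A_diag_nonzero[OF i]] by simp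
qed

lemma FH_eq_of_double_minus_one:
  assumes i: "i \<in> {1..r}" and j: "j \<in> {1..r}" and "A' i j = -1" "A' j i = -1"
  shows "FH j b = \<iota> (1 / A j j) * dp j b - \<iota> (1 / A i i) * dp i b"
proof -
  have "i \<noteq> j"
    using assms diag by force
  have "A j i = - A i i"
    using \<open>A' j i = -1\<close> A_diag_nonzero[OF i] by (simp add: A'_def field_simps)
  moreover have "B i j = 1 / A j j"
    using A'_minus_N[OF j i] double_minus_one_direct_factor[OF i j assms(3,4)] assms(3)
      A_diag_nonzero[OF j] by (simp add: field_simps)
  ultimately have "\<iota> (A i i) * dm j b = \<iota> (1 / A j j) * dp i b"
    using dm_dp_dependent[OF i j \<open>i \<noteq> j\<close>, of b] by (simp add: iota_simps)
  then have "dm j b = \<iota> (1 / A i i) * (\<iota> (1 / A j j) * dp i b)"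
    using iota_cancel[OF A_diag_nonzero[OF i], of "dm j b"] by simp
  then have "\<iota> (A j j) * dm j b = \<iota> (1 / A i i) * dp i b"
    using iota_cancel[OF A_diag_nonzero[OF j]] by (simp add: mult.left_commute[of "\<iota> (A j j)"])
  then show ?thesis
    using A_dm_eq[OF j, of b] by (simp add: algebra_simps)
qed

lemma FH_add_eq_zero:
  assumes "i \<in> {1..r}" "j \<in> {1..r}" "A' i j = -1" "A' j i = -1"
  shows "FH i b + FH j b = 0"
  using FH_eq_of_double_minus_one[OF assms] FH_eq_of_double_minus_one[of j i] assms by simp

end

theorem theorem3p5:
  fixes r :: nat and N :: "nat \<Rightarrow> nat \<Rightarrow> int"
    and \<alpha> :: "nat \<Rightarrow> nat \<Rightarrow> complex"
    and \<iota> :: "complex \<Rightarrow> 'a::comm_ring_1"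
    and FH :: "nat \<Rightarrow> 'a \<Rightarrow> 'a"
    and v vinv :: "nat \<Rightarrow> 'a"
    and dp dm :: "nat \<Rightarrow> 'a \<Rightarrow> 'a"
  defines "m \<equiv> r + corank r N"
  defines "A \<equiv> (\<lambda>i j. lform_Im \<iota> m FH (\<alpha> i) (dp j))"
  defines "A' \<equiv> (\<lambda>i j. A i j / A j j)"
  assumes gcm: "gcm r N"
    and alpha_N: "\<forall>i\<in>{1..r}. \<forall>j\<in>{1..r}. \<alpha> j i = of_int (N i j)"
    and alpha_indep: "lin_indep_on {1..r} {1..m} \<alpha>"
    and iota: "cplx_alg_hom \<iota>"
    and F_der: "\<forall>k\<in>{1..m}. is_der \<iota> (FH k)"
    and F_comm: "\<forall>k\<in>{1..m}. \<forall>l\<in>{1..m}. der_br (FH k) (FH l) = (\<lambda>b. 0)"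
    and v_inv: "\<forall>i\<in>{1..r}. v i * vinv i = 1"
    and v_eig: "\<forall>i\<in>{1..r}. \<forall>k\<in>{1..m}. FH k (v i) = \<iota> (\<alpha> i k) * v i"
    and dp_Im: "\<forall>i\<in>{1..r}. dp i \<in> ImF \<iota> m FH"
    and dm_Im: "\<forall>i\<in>{1..r}. dm i \<in> ImF \<iota> m FH"
    and br_ii: "\<forall>i\<in>{1..r}. der_br (\<lambda>b. v i * dp i b) (\<lambda>b. vinv i * dm i b) = FH i"
    and br_ij: "\<forall>i\<in>{1..r}. \<forall>j\<in>{1..r}. i \<noteq> j \<longrightarrow>
                  der_br (\<lambda>b. v i * dp i b) (\<lambda>b. vinv j * dm j b) = (\<lambda>b. 0)"
  shows "(\<forall>i\<in>{1..r}. A i i \<noteq> 0)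
    \<and> (\<forall>i\<in>{1..r}. dm i = (\<lambda>b. \<iota> (1 / A i i) * (- FH i b + \<iota> (1 / A i i) * dp i b)))
    \<and> (\<forall>i\<in>{1..r}. \<forall>j\<in>{1..r}. i \<noteq> j \<longrightarrow> A' i j \<in> {0, -1})
    \<and> (\<forall>i\<in>{1..r}. \<forall>j\<in>{1..r}. A' i j + A' j i = of_int (N j i))
    \<and> (\<forall>i\<in>{1..r}. \<forall>j\<in>{1..r}. A' i j = -1 \<longrightarrow>
          (\<forall>k\<in>{1..r}. k \<noteq> j \<longrightarrow> A' i k \<noteq> -1) \<and> (\<forall>k\<in>{1..r}. k \<noteq> i \<longrightarrow> A' k j \<noteq> -1))
    \<and> (\<forall>i\<in>{1..r}. \<forall>j\<in>{1..r}. A' i j = -1 \<and> A' j i = -1 \<longrightarrow>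
          N i j = -2 \<and> N j i = -2 \<and>
          (\<forall>k\<in>{1..r} - {i, j}. N i k = 0 \<and> N k i = 0 \<and> N j k = 0 \<and> N k j = 0) \<and>
          (\<forall>b. FH i b + FH j b = 0))"
proof -
  interpret derivation_realisation r N \<alpha> \<iota> m FH v vinv dp dm
    rewrites "derivation_realisation.A \<alpha> \<iota> m FH dp = A"
      and "derivation_realisation.A' \<alpha> \<iota> m FH dp = A'"
  proof -
    show "derivation_realisation r N \<alpha> \<iota> m FH v vinv dp dm"
      by unfold_locales (use gcm alpha_N iota F_der F_comm v_inv v_eig dp_Im dm_Im br_ii br_ij in
        \<open>auto simp: m_def\<close>)
    then show "derivation_realisation.A \<alpha> \<iota> m FH dp = A"
      by (simp add: derivation_realisation.A_def A_def fun_eq_iff)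
    then show "derivation_realisation.A' \<alpha> \<iota> m FH dp = A'"
      using \<open>derivation_realisation r N \<alpha> \<iota> m FH v vinv dp dm\<close>
      by (simp add: derivation_realisation.A'_def A'_def fun_eq_iff)
  qed
  show ?thesis
  proof (intro conjI)
    show "\<forall>i\<in>{1..r}. \<forall>j\<in>{1..r}. A' i j = -1 \<longrightarrow>
        (\<forall>k\<in>{1..r}. k \<noteq> j \<longrightarrow> A' i k \<noteq> -1) \<and> (\<forall>k\<in>{1..r}. k \<noteq> i \<longrightarrow> A' k j \<noteq> -1)"
      using minus_one_unique_in_row minus_one_unique_in_column by blast
    show "\<forall>i\<in>{1..r}. \<forall>j\<in>{1..r}. A' i j = -1 \<and> A' j i = -1 \<longrightarrow>
        N i j = -2 \<and> N j i = -2 \<and>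
        (\<forall>k\<in>{1..r} - {i, j}. N i k = 0 \<and> N k i = 0 \<and> N j k = 0 \<and> N k j = 0) \<and>
        (\<forall>b. FH i b + FH j b = 0)"
      using double_minus_one_direct_factor FH_add_eq_zero by blast
  qed (use A_diag_nonzero dm_eq offdiag_values add_transpose in blast)+
qed

end
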